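(* Let $\Omega\subset\mathbb{R}^N$ be a bounded open set, $\sigma>0$, $h:[0,\sigma)\to\mathbb{R}^+$ continuous, strictly increasing with $\lim_{s\to\sigma^-}h(s)=+\infty$, and suppose there exists $\gamma\in[1,2)$ with $\lim_{s\to\sigma^-}(\sigma-s)^\gamma h(s)=C>0$. Let $f\in L^p(\Omega)$, $p>N/2$, $f\ge0$, and $\lambda>0$. Let $H(s)=\int_0^s h$, $\psi(s)=\int_0^s e^{-H(t)}dt$, $L=\psi(\sigma)$, and $g(s)=e^{-H(\psi^{-1}(s))}$ on $[0,L]$ ($g(L)=0$). Let $\underline v,\overline v\in H^1(\Omega)$ take values in $[0,L]$ a.e., satisfy $-\Delta\underline v\le\lambda f g(\underline v)$ and $-\Delta\overline v\ge\lambda f g(\overline v)$ in $H^{-1}(\Omega)$ (i.e. tested against nonnegative functions of $H^1_0(\Omega)$), and $(\underline v-\overline v)\le0$ on $\partial\Omega$. Then $\underline v\le\overline v$ a.e. in $\Omega$. *)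

theory Defs
  imports "HOL-Analysis.Analysis"
begin

definition pd :: "'n::finite \<Rightarrow> (real^'n \<Rightarrow> real) \<Rightarrow> real^'n \<Rightarrow> real" where
  "pd i \<phi> x = frechet_derivative \<phi> (at x) (axis i 1)"

fun Ck :: "nat \<Rightarrow> (real^'n::finite \<Rightarrow> real) \<Rightarrow> bool" where
  "Ck 0 \<phi> = continuous_on UNIV \<phi>"
| "Ck (Suc k) \<phi> = (continuous_on UNIV \<phi> \<and> (\<forall>x. \<phi> differentiable (at x)) \<and> (\<forall>i. Ck k (pd i \<phi>)))"

definition smooth :: "(real^'n::finite \<Rightarrow> real) \<Rightarrow> bool" where
  "smooth \<phi> \<longleftrightarrow> (\<forall>k. Ck k \<phi>)"

definition test_fn :: "(real^'n::finite) set \<Rightarrow> (real^'n \<Rightarrow> real) \<Rightarrow> bool" where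
  "test_fn \<Omega> \<phi> \<longleftrightarrow> smooth \<phi> \<and> compact (closure {x. \<phi> x \<noteq> 0}) \<and> closure {x. \<phi> x \<noteq> 0} \<subseteq> \<Omega>"

definition L2 :: "(real^'n::finite) set \<Rightarrow> (real^'n \<Rightarrow> real) \<Rightarrow> bool" where
  "L2 \<Omega> u \<longleftrightarrow> u \<in> borel_measurable (lebesgue_on \<Omega>) \<and> integrable (lebesgue_on \<Omega>) (\<lambda>x. (u x)^2)"

definition Lp :: "real \<Rightarrow> (real^'n::finite) set \<Rightarrow> (real^'n \<Rightarrow> real) \<Rightarrow> bool" where
  "Lp p \<Omega> u \<longleftrightarrow> u \<in> borel_measurable (lebesgue_on \<Omega>) \<and> integrable (lebesgue_on \<Omega>) (\<lambda>x. \<bar>u x\<bar> powr p)"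

definition weak_grad :: "(real^'n::finite) set \<Rightarrow> (real^'n \<Rightarrow> real) \<Rightarrow> (real^'n \<Rightarrow> real^'n) \<Rightarrow> bool" where
  "weak_grad \<Omega> u G \<longleftrightarrow> (\<forall>i. L2 \<Omega> (\<lambda>x. G x $ i)) \<and>
     (\<forall>\<phi> i. test_fn \<Omega> \<phi> \<longrightarrow>
        integral\<^sup>L (lebesgue_on \<Omega>) (\<lambda>x. u x * pd i \<phi> x) = - integral\<^sup>L (lebesgue_on \<Omega>) (\<lambda>x. G x $ i * \<phi> x))"

definition H1 :: "(real^'n::finite) set \<Rightarrow> (real^'n \<Rightarrow> real) \<Rightarrow> bool" where
  "H1 \<Omega> u \<longleftrightarrow> L2 \<Omega> u \<and> (\<exists>G. weak_grad \<Omega> u G)"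

definition wgrad :: "(real^'n::finite) set \<Rightarrow> (real^'n \<Rightarrow> real) \<Rightarrow> real^'n \<Rightarrow> real^'n" where
  "wgrad \<Omega> u = (SOME G. weak_grad \<Omega> u G)"

definition H10 :: "(real^'n::finite) set \<Rightarrow> (real^'n \<Rightarrow> real) \<Rightarrow> bool" where
  "H10 \<Omega> u \<longleftrightarrow> H1 \<Omega> u \<and> (\<exists>\<phi>s. (\<forall>k. test_fn \<Omega> (\<phi>s k)) \<and>
     (\<lambda>k. integral\<^sup>L (lebesgue_on \<Omega>) (\<lambda>x. (\<phi>s k x - u x)^2)
         + (\<Sum>i\<in>UNIV. integral\<^sup>L (lebesgue_on \<Omega>) (\<lambda>x. (pd i (\<phi>s k) x - wgrad \<Omega> u x $ i)^2)))
       \<longlonglongrightarrow> 0)"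

end

(*
  Put a = max 0 (vl - vu), which lies in H^1_0, and test both differential inequalities with it.
  Since g is nonincreasing and a > 0 only where vl > vu, subtracting gives
  int (grad vl - grad vu) . grad a <= 0.  Now vl - vu = a - b with b = max 0 (vu - vl), and
  grad b . grad a = 0 a.e. (Stampacchia), so int |grad a|^2 <= 0; an H^1_0 function on a bounded
  domain with vanishing gradient is zero.

  Weak derivatives are only accessible through the test functions phi_k -> a in H^1, so the usual
  truncation arguments are replaced by the polynomial cut-offs 1 - (1 - a/M)^m, which converge to
  the indicator of {a <> 0} and satisfy the chain rule by the product rule alone.
*)
theory Submission
  imports Defs
begin

section \<open>Partial derivatives and test functions\<close>

lemma pd_has_derivative: "(f has_derivative f') (at x) \<Longrightarrow> pd i f x = f' (axis i 1)"
  unfolding pd_def by (metis frechet_derivative_at)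

lemma pd_add:
  "f differentiable (at x) \<Longrightarrow> g differentiable (at x) \<Longrightarrow> pd i (\<lambda>y. f y + g y) x = pd i f x + pd i g x"
  unfolding frechet_derivative_works
  by (subst pd_has_derivative[OF has_derivative_add]) (auto simp: pd_def)

lemma pd_mult:
  "f differentiable (at x) \<Longrightarrow> g differentiable (at x) \<Longrightarrow>
     pd i (\<lambda>y. f y * g y) x = f x * pd i g x + pd i f x * g x"
  unfolding frechet_derivative_works
  by (subst pd_has_derivative[OF has_derivative_mult]) (auto simp: pd_def)

lemma pd_const: "pd i (\<lambda>y. c) = (\<lambda>x. 0)"
  by (simp add: fun_eq_iff pd_has_derivative[OF has_derivative_const])

lemma pd_component: "pd i (\<lambda>y. y $ j) x = (if j = i then 1 else 0)"
  by (subst pd_has_derivative[OF bounded_linear_imp_has_derivative[OF bounded_linear_vec_nth]])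
    (simp add: axis_def)

lemma pd_eq_0_outside_support:
  assumes "x \<notin> closure {x. f x \<noteq> 0}"
  shows "pd i f x = 0"
proof -
  have "(f has_derivative (\<lambda>h. 0)) (at x)"
  proof (rule has_derivative_transform_within_open[OF has_derivative_const])
    show "open (- closure {x. f x \<noteq> 0})" by (simp add: open_Compl)
    show "x \<in> - closure {x. f x \<noteq> 0}" using assms by simp
    show "0 = f y" if "y \<in> - closure {x. f x \<noteq> 0}" for y
      using that closure_subset[of "{x. f x \<noteq> 0}"] by auto
  qed
  then show ?thesis by (simp add: pd_has_derivative)
qed

lemma Ck_SucD: "Ck (Suc k) f \<Longrightarrow> Ck k f"
  by (induction k arbitrary: f) auto

lemma Ck_const: "Ck k (\<lambda>x. c)"
  by (induction k arbitrary: c) (simp_all add: pd_const)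

lemma Ck_component: "Ck k (\<lambda>x. x $ j)"
proof (cases k)
  case (Suc m)
  have "pd i (\<lambda>y. y $ j) = (\<lambda>x. if j = i then 1 else 0)" for i
    by (simp add: fun_eq_iff pd_component)
  then show ?thesis
    using Suc Ck_const[of m 1] Ck_const[of m 0]
    by (auto intro: linear_continuous_on bounded_linear_imp_differentiable bounded_linear_vec_nth)
qed (auto intro: linear_continuous_on bounded_linear_vec_nth)

lemma Ck_add: "Ck k f \<Longrightarrow> Ck k g \<Longrightarrow> Ck k (\<lambda>x. f x + g x)"
proof (induction k arbitrary: f g)
  case (Suc k)
  then have "pd i (\<lambda>x. f x + g x) = (\<lambda>x. pd i f x + pd i g x)" for i
    by (auto simp: fun_eq_iff pd_add)
  with Suc show ?case by (auto intro: continuous_on_add differentiable_add)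
qed (auto intro: continuous_on_add)

lemma Ck_mult: "Ck k f \<Longrightarrow> Ck k g \<Longrightarrow> Ck k (\<lambda>x. f x * g x)"
proof (induction k arbitrary: f g)
  case (Suc k)
  then have "pd i (\<lambda>x. f x * g x) = (\<lambda>x. f x * pd i g x + pd i f x * g x)" for i
    by (auto simp: fun_eq_iff pd_mult)
  moreover have "Ck k (\<lambda>x. f x * pd i g x + pd i f x * g x)" for i
    using Suc Ck_SucD[OF Suc.prems(1)] Ck_SucD[OF Suc.prems(2)] by (intro Ck_add Suc.IH) auto
  ultimately show ?case using Suc.prems by (auto intro: continuous_on_mult differentiable_mult)
qed (auto intro: continuous_on_mult)

lemma smooth_mult: "smooth f \<Longrightarrow> smooth g \<Longrightarrow> smooth (\<lambda>x. f x * g x)"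
  unfolding smooth_def by (blast intro: Ck_mult)

lemma smooth_pd: "smooth f \<Longrightarrow> smooth (pd i f)"
  unfolding smooth_def by (metis Ck.simps(2))

lemma smooth_differentiable: "smooth f \<Longrightarrow> f differentiable (at x)"
  unfolding smooth_def by (metis Ck.simps(2))

lemma smooth_continuous: "smooth f \<Longrightarrow> continuous_on UNIV f"
  unfolding smooth_def by (metis Ck.simps(1))

lemma smooth_component: "smooth (\<lambda>x. x $ j)"
  unfolding smooth_def by (simp add: Ck_component)

lemma test_fn_support_mono:
  assumes "test_fn \<Omega> f" "smooth g" "{x. g x \<noteq> 0} \<subseteq> closure {x. f x \<noteq> 0}"
  shows "test_fn \<Omega> g"
proof -
  have sub: "closure {x. g x \<noteq> 0} \<subseteq> closure {x. f x \<noteq> 0}"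
    using assms(3) by (rule closure_minimal) simp
  moreover have "compact (closure {x. f x \<noteq> 0})" "closure {x. f x \<noteq> 0} \<subseteq> \<Omega>"
    using assms(1) unfolding test_fn_def by auto
  ultimately have "compact (closure {x. g x \<noteq> 0})" "closure {x. g x \<noteq> 0} \<subseteq> \<Omega>"
    using compact_Int_closed[OF _ closed_closure, of "closure {x. f x \<noteq> 0}" "{x. g x \<noteq> 0}"]
    by (auto simp: Int_absorb1)
  then show ?thesis using assms(2) unfolding test_fn_def by simp
qed

lemma test_fn_mult: "test_fn \<Omega> f \<Longrightarrow> smooth g \<Longrightarrow> test_fn \<Omega> (\<lambda>x. g x * f x)"
  by (rule test_fn_support_mono)
    (auto simp: test_fn_def intro: smooth_mult closure_subset[THEN subsetD])

lemma test_fn_pd: "test_fn \<Omega> f \<Longrightarrow> test_fn \<Omega> (pd i f)"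
  by (rule test_fn_support_mono)
    (use pd_eq_0_outside_support in \<open>auto simp: test_fn_def intro: smooth_pd\<close>)

lemma test_fn_bounded:
  assumes "test_fn \<Omega> f"
  obtains K where "\<And>x. \<bar>f x\<bar> \<le> K"
proof -
  let ?S = "closure {x. f x \<noteq> 0}"
  have "continuous_on ?S f"
    using assms unfolding test_fn_def by (auto intro: continuous_on_subset smooth_continuous)
  then have "compact (f ` ?S)"
    using assms unfolding test_fn_def by (auto intro: compact_continuous_image)
  then obtain K where K: "\<And>y. y \<in> f ` ?S \<Longrightarrow> \<bar>y\<bar> \<le> K"
    by (metis compact_imp_bounded bounded_iff real_norm_def)
  have "\<bar>f x\<bar> \<le> max K 0" for x
    using K[of "f x"] closure_subset[of "{x. f x \<noteq> 0}"] by (cases "f x = 0") auto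
  then show thesis by (rule that)
qed

lemma borel_measurable_lebesgue_onI:
  "f \<in> borel_measurable borel \<Longrightarrow> f \<in> borel_measurable (lebesgue_on S)"
  by (intro measurable_restrict_space1 measurable_completion) simp

lemma test_fn_measurable: "test_fn \<Omega> f \<Longrightarrow> f \<in> borel_measurable (lebesgue_on S)"
  unfolding test_fn_def
  by (blast intro: borel_measurable_lebesgue_onI borel_measurable_continuous_onI smooth_continuous)

section \<open>Square-integrable functions\<close>

definition square_integrable :: "'a measure \<Rightarrow> ('a \<Rightarrow> real) \<Rightarrow> bool" where
  "square_integrable M u \<longleftrightarrow> u \<in> borel_measurable M \<and> integrable M (\<lambda>x. (u x)\<^sup>2)"

lemma L2_iff_square_integrable: "L2 \<Omega> u \<longleftrightarrow> square_integrable (lebesgue_on \<Omega>) u"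
  unfolding L2_def square_integrable_def ..

lemma abs_mult_le_weighted_squares:
  fixes a b t :: real
  assumes "t > 0"
  shows "\<bar>a * b\<bar> \<le> (t * a\<^sup>2 + b\<^sup>2 / t) / 2"
proof -
  have "0 \<le> (t * \<bar>a\<bar> - \<bar>b\<bar>)\<^sup>2 / t" using assms by simp
  also have "\<dots> = t * a\<^sup>2 + b\<^sup>2 / t - 2 * \<bar>a * b\<bar>"
    using assms by (simp add: power2_diff field_simps abs_mult power2_eq_square)
  finally show ?thesis by simp
qed

lemma square_integrable_mult_integrable:
  assumes "square_integrable M u" "square_integrable M v"
  shows "integrable M (\<lambda>x. u x * v x)"
proof (rule Bochner_Integration.integrable_bound)
  show "integrable M (\<lambda>x. ((u x)\<^sup>2 + (v x)\<^sup>2) / 2)"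
    using assms unfolding square_integrable_def by simp
  show "AE x in M. norm (u x * v x) \<le> norm (((u x)\<^sup>2 + (v x)\<^sup>2) / 2)"
    using abs_mult_le_weighted_squares[of 1] by simp
qed (use assms in \<open>auto simp: square_integrable_def\<close>)

lemma square_integrable_add:
  assumes "square_integrable M u" "square_integrable M v"
  shows "square_integrable M (\<lambda>x. u x + v x)"
proof -
  have "integrable M (\<lambda>x. (u x)\<^sup>2 + (v x)\<^sup>2 + 2 * (u x * v x))"
    using assms square_integrable_mult_integrable[OF assms] unfolding square_integrable_def by simp
  then show ?thesis
    using assms unfolding square_integrable_def
    by (auto intro: borel_measurable_add simp: power2_sum algebra_simps)
qed

lemma square_integrable_cmult: "square_integrable M u \<Longrightarrow> square_integrable M (\<lambda>x. c * u x)"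
  unfolding square_integrable_def by (auto intro: borel_measurable_times simp: power_mult_distrib)

lemma square_integrable_diff:
  "square_integrable M u \<Longrightarrow> square_integrable M v \<Longrightarrow> square_integrable M (\<lambda>x. u x - v x)"
  using square_integrable_add[of M u "\<lambda>x. - 1 * v x"] square_integrable_cmult[of M v "- 1"] by simp

lemma square_integrable_mult_bounded:
  assumes "square_integrable M u" "c \<in> borel_measurable M" "AE x in M. \<bar>c x\<bar> \<le> K"
  shows "square_integrable M (\<lambda>x. c x * u x)"
  unfolding square_integrable_def
proof
  show "(\<lambda>x. c x * u x) \<in> borel_measurable M"
    using assms unfolding square_integrable_def by (auto intro: borel_measurable_times)
  show "integrable M (\<lambda>x. (c x * u x)\<^sup>2)"
  proof (rule Bochner_Integration.integrable_bound)
    show "integrable M (\<lambda>x. K\<^sup>2 * (u x)\<^sup>2)"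
      using assms unfolding square_integrable_def by simp
    show "AE x in M. norm ((c x * u x)\<^sup>2) \<le> norm (K\<^sup>2 * (u x)\<^sup>2)"
      using assms(3)
    proof eventually_elim
      case (elim x)
      then have "(c x)\<^sup>2 \<le> K\<^sup>2" using power_mono[OF elim abs_ge_zero, of 2] by simp
      then show ?case by (simp add: power_mult_distrib mult_right_mono)
    qed
  qed (use assms in \<open>auto simp: square_integrable_def intro: borel_measurable_times\<close>)
qed

lemma (in finite_measure) square_integrable_bounded:
  "u \<in> borel_measurable M \<Longrightarrow> AE x in M. \<bar>u x\<bar> \<le> K \<Longrightarrow> square_integrable M u"
  using square_integrable_mult_bounded[of M "\<lambda>x. 1" u K]
  by (simp add: square_integrable_def integrable_const)

lemma integral_mult_tendsto_L2:
  assumes u: "square_integrable M u" and s: "\<And>k. square_integrable M (s k)" "square_integrable M s\<^sub>0"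
    and lim: "(\<lambda>k. LINT x|M. (s k x - s\<^sub>0 x)\<^sup>2) \<longlonglongrightarrow> 0"
  shows "(\<lambda>k. LINT x|M. u x * s k x) \<longlonglongrightarrow> (LINT x|M. u x * s\<^sub>0 x)"
proof (rule LIMSEQ_I)
  fix r :: real assume "0 < r"
  define A where "A = (LINT x|M. (u x)\<^sup>2)"
  define t where "t = r / (A + 1)"
  have "0 \<le> A" unfolding A_def by simp
  then have t: "0 < t" "t * A < r"
    using \<open>0 < r\<close> by (auto simp: t_def field_simps)
  obtain N where N: "\<And>k. k \<ge> N \<Longrightarrow> (LINT x|M. (s k x - s\<^sub>0 x)\<^sup>2) < r * t"
    using LIMSEQ_D[OF lim, of "r * t"] \<open>0 < r\<close> t by auto
  have "\<bar>(LINT x|M. u x * s k x) - (LINT x|M. u x * s\<^sub>0 x)\<bar> < r" if "k \<ge> N" for k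
  proof -
    have d: "square_integrable M (\<lambda>x. s k x - s\<^sub>0 x)" by (rule square_integrable_diff[OF s])
    have "\<bar>(LINT x|M. u x * s k x) - (LINT x|M. u x * s\<^sub>0 x)\<bar> = \<bar>LINT x|M. u x * (s k x - s\<^sub>0 x)\<bar>"
      using square_integrable_mult_integrable[OF u s(1)] square_integrable_mult_integrable[OF u s(2)]
      by (simp add: right_diff_distrib)
    also have "\<dots> \<le> (LINT x|M. \<bar>u x * (s k x - s\<^sub>0 x)\<bar>)"
      by (rule integral_abs_bound)
    also have "\<dots> \<le> (LINT x|M. (t * (u x)\<^sup>2 + (s k x - s\<^sub>0 x)\<^sup>2 / t) / 2)"
      using square_integrable_mult_integrable[OF u d] u d abs_mult_le_weighted_squares[OF t(1)]
      by (intro integral_mono) (auto simp: square_integrable_def)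
    also have "\<dots> = (t * A + (LINT x|M. (s k x - s\<^sub>0 x)\<^sup>2) / t) / 2"
      using u d by (simp add: A_def square_integrable_def)
    also have "\<dots> < r"
    proof -
      have "(LINT x|M. (s k x - s\<^sub>0 x)\<^sup>2) / t < r"
        using N[OF that] t(1) by (simp add: pos_divide_less_eq)
      then show ?thesis using t(2) by argo
    qed
    finally show ?thesis .
  qed
  then show "\<exists>N. \<forall>k\<ge>N. norm ((LINT x|M. u x * s k x) - (LINT x|M. u x * s\<^sub>0 x)) < r"
    by auto
qed

section \<open>Weak derivatives\<close>

definition weak_pd :: "(real^'n::finite) set \<Rightarrow> 'n \<Rightarrow> (real^'n \<Rightarrow> real) \<Rightarrow> (real^'n \<Rightarrow> real) \<Rightarrow> bool" where
  "weak_pd \<Omega> i u w \<longleftrightarrow> (\<forall>\<eta>. test_fn \<Omega> \<eta> \<longrightarrow>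
     (LINT x|lebesgue_on \<Omega>. u x * pd i \<eta> x) = - (LINT x|lebesgue_on \<Omega>. w x * \<eta> x))"

definition vanishes_weakly :: "(real^'n::finite) set \<Rightarrow> (real^'n \<Rightarrow> real) \<Rightarrow> bool" where
  "vanishes_weakly \<Omega> w \<longleftrightarrow> (\<forall>\<eta>. test_fn \<Omega> \<eta> \<longrightarrow> (LINT x|lebesgue_on \<Omega>. w x * \<eta> x) = 0)"

lemma weak_grad_imp_weak_pd: "weak_grad \<Omega> u G \<Longrightarrow> weak_pd \<Omega> i u (\<lambda>x. G x $ i)"
  unfolding weak_grad_def weak_pd_def by blast

lemma weak_grad_square_integrable:
  "weak_grad \<Omega> u G \<Longrightarrow> square_integrable (lebesgue_on \<Omega>) (\<lambda>x. G x $ i)"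
  unfolding weak_grad_def L2_iff_square_integrable by blast

lemma H1_weak_grad:
  assumes "H1 \<Omega> u"
  shows "weak_grad \<Omega> u (wgrad \<Omega> u)"
proof -
  obtain G where "weak_grad \<Omega> u G" using assms unfolding H1_def by blast
  then show ?thesis unfolding wgrad_def by (rule someI[where P="weak_grad \<Omega> u"])
qed

lemma test_fn_square_integrable:
  assumes "finite_measure (lebesgue_on S)" "test_fn \<Omega> \<eta>"
  shows "square_integrable (lebesgue_on S) \<eta>"
proof -
  obtain K where "\<And>x. \<bar>\<eta> x\<bar> \<le> K" using test_fn_bounded[OF assms(2)] by metis
  then show ?thesis
    by (intro finite_measure.square_integrable_bounded[OF assms(1) test_fn_measurable[OF assms(2)]]) auto
qed

lemma square_integrable_mult_test_fn:
  assumes "square_integrable (lebesgue_on S) w" "test_fn \<Omega> \<eta>"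
  shows "square_integrable (lebesgue_on S) (\<lambda>x. w x * \<eta> x)"
proof -
  obtain K where "\<And>x. \<bar>\<eta> x\<bar> \<le> K" using test_fn_bounded[OF assms(2)] by metis
  then show ?thesis
    using square_integrable_mult_bounded[OF assms(1) test_fn_measurable[OF assms(2)], of K]
    by (simp add: mult.commute)
qed

lemma integrable_mult_test_fn:
  "finite_measure (lebesgue_on S) \<Longrightarrow> square_integrable (lebesgue_on S) w \<Longrightarrow> test_fn \<Omega> \<eta> \<Longrightarrow>
     integrable (lebesgue_on S) (\<lambda>x. w x * \<eta> x)"
  by (erule square_integrable_mult_integrable[OF _ test_fn_square_integrable])

lemma weak_pd_lincomb:
  assumes fin: "finite_measure (lebesgue_on \<Omega>)"
    and L2: "square_integrable (lebesgue_on \<Omega>) u" "square_integrable (lebesgue_on \<Omega>) v"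
      "square_integrable (lebesgue_on \<Omega>) w" "square_integrable (lebesgue_on \<Omega>) z"
    and pd: "weak_pd \<Omega> i u w" "weak_pd \<Omega> i v z"
  shows "weak_pd \<Omega> i (\<lambda>x. u x + c * v x) (\<lambda>x. w x + c * z x)"
  unfolding weak_pd_def
proof (intro allI impI)
  fix \<eta> assume \<eta>: "test_fn \<Omega> \<eta>"
  note int = integrable_mult_test_fn[OF fin _ test_fn_pd[OF \<eta>]] integrable_mult_test_fn[OF fin _ \<eta>]
  have "(LINT x|lebesgue_on \<Omega>. (u x + c * v x) * pd i \<eta> x)
      = (LINT x|lebesgue_on \<Omega>. u x * pd i \<eta> x) + c * (LINT x|lebesgue_on \<Omega>. v x * pd i \<eta> x)"
    using int(1)[OF L2(1)] int(1)[OF L2(2)] by (simp add: distrib_right mult.assoc)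
  also have "\<dots> = - (LINT x|lebesgue_on \<Omega>. w x * \<eta> x) - c * (LINT x|lebesgue_on \<Omega>. z x * \<eta> x)"
    using pd \<eta> unfolding weak_pd_def by simp
  also have "\<dots> = - (LINT x|lebesgue_on \<Omega>. (w x + c * z x) * \<eta> x)"
    using int(2)[OF L2(3)] int(2)[OF L2(4)] by (simp add: distrib_right mult.assoc)
  finally show "(LINT x|lebesgue_on \<Omega>. (u x + c * v x) * pd i \<eta> x)
      = - (LINT x|lebesgue_on \<Omega>. (w x + c * z x) * \<eta> x)" .
qed

lemma vanishes_weakly_lincomb:
  assumes fin: "finite_measure (lebesgue_on \<Omega>)"
    and "square_integrable (lebesgue_on \<Omega>) w" "square_integrable (lebesgue_on \<Omega>) z"
    and "vanishes_weakly \<Omega> w" "vanishes_weakly \<Omega> z"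
  shows "vanishes_weakly \<Omega> (\<lambda>x. w x + c * z x)"
  unfolding vanishes_weakly_def
proof (intro allI impI)
  fix \<eta> assume \<eta>: "test_fn \<Omega> \<eta>"
  have "(LINT x|lebesgue_on \<Omega>. (w x + c * z x) * \<eta> x)
      = (LINT x|lebesgue_on \<Omega>. w x * \<eta> x) + c * (LINT x|lebesgue_on \<Omega>. z x * \<eta> x)"
    using integrable_mult_test_fn[OF fin assms(2) \<eta>] integrable_mult_test_fn[OF fin assms(3) \<eta>]
    by (simp add: distrib_right mult.assoc)
  then show "(LINT x|lebesgue_on \<Omega>. (w x + c * z x) * \<eta> x) = 0"
    using assms(4,5) \<eta> unfolding vanishes_weakly_def by simp
qed

section \<open>The transformed nonlinearity\<close>

locale transformed_nonlinearity =
  fixes \<sigma> L :: real and h H \<psi> g :: "real \<Rightarrow> real"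
  assumes \<sigma>_pos: "\<sigma> > 0"
    and h_continuous: "continuous_on {0..<\<sigma>} h"
    and h_nonneg: "\<forall>s\<in>{0..<\<sigma>}. h s \<ge> 0"
    and H_def: "\<forall>s. H s = integral {0..s} h"
    and \<psi>_def: "\<forall>s. \<psi> s = integral {0..s} (\<lambda>t. exp (- H t))"
    and L_def: "L = \<psi> \<sigma>"
    and g_def: "\<forall>s. g s = (if s < L then exp (- H (the_inv_into {0..<\<sigma>} \<psi> s)) else 0)"
begin

lemma h_integrable: "b < \<sigma> \<Longrightarrow> h integrable_on {0..b}"
  by (intro integrable_continuous_interval continuous_on_subset[OF h_continuous]) auto

lemma H_mono:
  assumes "0 \<le> t\<^sub>1" "t\<^sub>1 \<le> t\<^sub>2" "t\<^sub>2 < \<sigma>"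
  shows "H t\<^sub>1 \<le> H t\<^sub>2"
proof -
  have int: "h integrable_on {0..t\<^sub>2}" using h_integrable assms by simp
  have "integral {0..t\<^sub>1} h + integral {t\<^sub>1..t\<^sub>2} h = integral {0..t\<^sub>2} h"
    using assms int by (intro Henstock_Kurzweil_Integration.integral_combine) auto
  moreover have "0 \<le> integral {t\<^sub>1..t\<^sub>2} h"
    using assms h_nonneg integrable_subinterval_real[OF int, of t\<^sub>1 t\<^sub>2]
    by (intro integral_nonneg) auto
  ultimately show ?thesis using H_def by simp
qed

lemma exp_H_integrable: "b < \<sigma> \<Longrightarrow> (\<lambda>t. exp (- H t)) integrable_on {0..b}"
proof -
  assume "b < \<sigma>"
  then have "continuous_on {0..b} (\<lambda>x. integral {0..x} h)"
    by (intro indefinite_integral_continuous_1 h_integrable)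
  moreover have "H = (\<lambda>x. integral {0..x} h)" using H_def by auto
  ultimately show ?thesis by (intro integrable_continuous_interval continuous_intros) simp
qed

lemma \<psi>_strict_mono: "strict_mono_on {0..<\<sigma>} \<psi>"
proof (rule strict_mono_onI)
  fix t\<^sub>1 t\<^sub>2 assume t: "t\<^sub>1 \<in> {0..<\<sigma>}" "t\<^sub>2 \<in> {0..<\<sigma>}" "t\<^sub>1 < t\<^sub>2"
  have int: "(\<lambda>t. exp (- H t)) integrable_on {0..t\<^sub>2}" using exp_H_integrable t by simp
  have "integral {0..t\<^sub>1} (\<lambda>t. exp (- H t)) + integral {t\<^sub>1..t\<^sub>2} (\<lambda>t. exp (- H t)) = \<psi> t\<^sub>2"
    using t int \<psi>_def by (simp add: Henstock_Kurzweil_Integration.integral_combine)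
  moreover have "integral {t\<^sub>1..t\<^sub>2} (\<lambda>t. exp (- H t\<^sub>2)) \<le> integral {t\<^sub>1..t\<^sub>2} (\<lambda>t. exp (- H t))"
    using t H_mono by (intro integral_le integrable_subinterval_real[OF int]) auto
  moreover have "0 < integral {t\<^sub>1..t\<^sub>2} (\<lambda>t. exp (- H t\<^sub>2))" using t by simp
  ultimately show "\<psi> t\<^sub>1 < \<psi> t\<^sub>2" using \<psi>_def by simp
qed

lemma \<psi>_nonneg: "t \<in> {0..<\<sigma>} \<Longrightarrow> 0 \<le> \<psi> t"
  using strict_mono_on_leD[OF \<psi>_strict_mono, of 0 t] \<sigma>_pos \<psi>_def by auto

lemma L_nonneg: "0 \<le> L"
  using \<psi>_def unfolding L_def
  by (cases "(\<lambda>t. exp (- H t)) integrable_on {0..\<sigma>}") (auto simp: integral_nonneg not_integrable_integral)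

lemma \<psi>_onto:
  assumes "0 \<le> s" "s < L"
  shows "s \<in> \<psi> ` {0..<\<sigma>}"
proof (cases "(\<lambda>t. exp (- H t)) integrable_on {0..\<sigma>}")
  case True
  have "\<psi> = (\<lambda>x. integral {0..x} (\<lambda>t. exp (- H t)))" using \<psi>_def by auto
  then have "continuous_on {0..\<sigma>} \<psi>" by (simp add: indefinite_integral_continuous_1[OF True])
  then obtain t where "0 \<le> t" "t \<le> \<sigma>" "\<psi> t = s"
    using IVT'[of \<psi> 0 s \<sigma>] assms L_def \<sigma>_pos \<psi>_def by auto
  moreover have "t \<noteq> \<sigma>" using assms L_def \<open>\<psi> t = s\<close> by auto
  ultimately show ?thesis by force
next
  case False
  then have "L = 0" using \<psi>_def L_def by (simp add: not_integrable_integral)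
  then show ?thesis using assms by simp
qed

lemma the_inv_\<psi>:
  assumes "0 \<le> s" "s < L"
  shows "the_inv_into {0..<\<sigma>} \<psi> s \<in> {0..<\<sigma>}" "\<psi> (the_inv_into {0..<\<sigma>} \<psi> s) = s"
  using the_inv_into_into[OF strict_mono_on_imp_inj_on[OF \<psi>_strict_mono] \<psi>_onto[OF assms] order_refl]
    f_the_inv_into_f[OF strict_mono_on_imp_inj_on[OF \<psi>_strict_mono] \<psi>_onto[OF assms]]
  by auto

lemma g_nonneg: "0 \<le> g s"
  using g_def by simp

lemma g_eq_0: "L \<le> s \<Longrightarrow> g s = 0"
  using g_def by simp

lemma g_le_one: "0 \<le> s \<Longrightarrow> g s \<le> 1"
  using g_def the_inv_\<psi> H_mono[of 0 "the_inv_into {0..<\<sigma>} \<psi> s"] H_def by auto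

lemma g_antimono: "antimono_on {0..L} g"
proof (rule monotone_onI)
  fix s\<^sub>1 s\<^sub>2 assume s: "s\<^sub>1 \<in> {0..L}" "s\<^sub>2 \<in> {0..L}" "s\<^sub>1 \<le> s\<^sub>2"
  show "g s\<^sub>2 \<le> g s\<^sub>1"
  proof (cases "s\<^sub>2 < L")
    case True
    let ?t\<^sub>1 = "the_inv_into {0..<\<sigma>} \<psi> s\<^sub>1" and ?t\<^sub>2 = "the_inv_into {0..<\<sigma>} \<psi> s\<^sub>2"
    have "?t\<^sub>1 \<le> ?t\<^sub>2"
      using strict_mono_on_less[OF \<psi>_strict_mono, of ?t\<^sub>2 ?t\<^sub>1] the_inv_\<psi>[of s\<^sub>1] the_inv_\<psi>[of s\<^sub>2] s True
      by auto
    then have "H ?t\<^sub>1 \<le> H ?t\<^sub>2" using H_mono the_inv_\<psi>[of s\<^sub>1] the_inv_\<psi>[of s\<^sub>2] s True by auto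
    then show ?thesis using g_def s True by simp
  qed (simp add: g_def g_nonneg)
qed

text \<open>Negative \<open>s\<close> have no preimage under \<open>\<psi>\<close>, so \<open>the_inv_into\<close> returns the junk value \<open>THE t. False\<close>.\<close>
lemma g_constant_on_negatives: "s < 0 \<Longrightarrow> g s = exp (- H (THE t. False))"
proof -
  assume "s < 0"
  then have "(\<lambda>t. t \<in> {0..<\<sigma>} \<and> \<psi> t = s) = (\<lambda>t. False)"
    using \<psi>_nonneg by force
  then show ?thesis using \<open>s < 0\<close> L_nonneg g_def by (simp add: the_inv_into_def)
qed

lemma g_measurable: "g \<in> borel_measurable borel"
proof -
  have "(\<lambda>s. - g s) \<in> borel_measurable borel"
  proof (rule borel_measurable_piecewise_mono[of "{{..<0}, {0..L}, {L<..}}"])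
    show "mono_on c (\<lambda>s. - g s)" if "c \<in> {{..<0}, {0..L}, {L<..}}" for c
      using that g_antimono g_constant_on_negatives g_eq_0
      by (auto simp: monotone_on_def)
  qed auto
  then show ?thesis by simp
qed

lemma integral_g_positive_part_mono:
  assumes f: "integrable M f" "AE x in M. 0 \<le> f x" and "0 \<le> c"
    and v: "v \<in> borel_measurable M" "AE x in M. 0 \<le> v x \<and> v x \<le> L"
    and w: "w \<in> borel_measurable M" "AE x in M. 0 \<le> w x \<and> w x \<le> L"
  shows "(LINT x|M. c * f x * g (v x) * max 0 (v x - w x)) \<le> (LINT x|M. c * f x * g (w x) * max 0 (v x - w x))"
proof (rule integral_mono_AE)
  have int: "integrable M (\<lambda>x. c * f x * g (u x) * max 0 (v x - w x))"
    if "u \<in> borel_measurable M" "AE x in M. 0 \<le> u x" for u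
  proof (rule Bochner_Integration.integrable_bound)
    show "integrable M (\<lambda>x. c * L * \<bar>f x\<bar>)" using f by simp
    show "(\<lambda>x. c * f x * g (u x) * max 0 (v x - w x)) \<in> borel_measurable M"
      using f v w measurable_compose[OF that(1) g_measurable] by (auto intro!: borel_measurable_times)
    show "AE x in M. norm (c * f x * g (u x) * max 0 (v x - w x)) \<le> norm (c * L * \<bar>f x\<bar>)"
      using v(2) w(2) that(2)
    proof eventually_elim
      case (elim x)
      have "c * \<bar>f x\<bar> * g (u x) * max 0 (v x - w x) \<le> c * \<bar>f x\<bar> * 1 * L"
        using elim \<open>0 \<le> c\<close> g_nonneg g_le_one by (intro mult_mono) (auto simp: mult_nonneg_nonneg)
      then show ?case using \<open>0 \<le> c\<close> g_nonneg L_nonneg by (simp add: abs_mult mult_ac)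
    qed
  qed
  show "integrable M (\<lambda>x. c * f x * g (v x) * max 0 (v x - w x))"
    using v by (intro int) auto
  show "integrable M (\<lambda>x. c * f x * g (w x) * max 0 (v x - w x))"
    using w by (intro int) auto
  show "AE x in M. c * f x * g (v x) * max 0 (v x - w x) \<le> c * f x * g (w x) * max 0 (v x - w x)"
    using f(2) v(2) w(2)
  proof eventually_elim
    case (elim x)
    show ?case
    proof (cases "w x \<le> v x")
      case True
      then have "g (v x) \<le> g (w x)"
        using g_antimono elim by (auto simp: monotone_on_def)
      then show ?thesis using elim \<open>0 \<le> c\<close> by (intro mult_right_mono mult_left_mono) auto
    qed simp
  qed
qed

end

section \<open>Functions in \<open>H\<^sup>1\<^sub>0\<close> approximated by test functions\<close>

locale H10_approximation =
  fixes \<Omega> :: "(real^'n::finite) set" and u :: "real^'n \<Rightarrow> real" and Du :: "real^'n \<Rightarrow> real^'n"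
    and \<phi> :: "nat \<Rightarrow> real^'n \<Rightarrow> real" and M :: real
  assumes open_domain: "open \<Omega>" and bounded_domain: "bounded \<Omega>"
    and u_measurable [measurable]: "u \<in> borel_measurable (lebesgue_on \<Omega>)"
    and u_bounds: "AE x in lebesgue_on \<Omega>. 0 \<le> u x \<and> u x \<le> M" and M_pos: "0 < M"
    and Du_L2: "\<And>i. square_integrable (lebesgue_on \<Omega>) (\<lambda>x. Du x $ i)"
    and weak_pd_u: "\<And>i. weak_pd \<Omega> i u (\<lambda>x. Du x $ i)"
    and \<phi>_test: "\<And>k. test_fn \<Omega> (\<phi> k)"
    and \<phi>_tendsto: "(\<lambda>k. LINT x|lebesgue_on \<Omega>. (\<phi> k x - u x)\<^sup>2) \<longlonglongrightarrow> 0"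
    and pd_\<phi>_tendsto: "\<And>i. (\<lambda>k. LINT x|lebesgue_on \<Omega>. (pd i (\<phi> k) x - Du x $ i)\<^sup>2) \<longlonglongrightarrow> 0"
begin

abbreviation \<mu> :: "(real^'n) measure" where "\<mu> \<equiv> lebesgue_on \<Omega>"

lemma finite_measure_\<mu>: "finite_measure \<mu>"
  by (rule finite_measure_lebesgue_on[OF lmeasurable_open[OF bounded_domain open_domain]])

lemma u_L2: "square_integrable \<mu> u"
  using u_bounds
  by (intro finite_measure.square_integrable_bounded[OF finite_measure_\<mu> u_measurable, of M])
    (auto elim: eventually_mono)

lemma Du_measurable [measurable]: "(\<lambda>x. Du x $ i) \<in> borel_measurable \<mu>"
  using Du_L2 unfolding square_integrable_def by blast

lemma \<phi>_smooth: "smooth (\<phi> k)"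
  using \<phi>_test unfolding test_fn_def by blast

lemma \<phi>_L2: "square_integrable \<mu> (\<phi> k)"
  by (rule test_fn_square_integrable[OF finite_measure_\<mu> \<phi>_test])

lemma pd_\<phi>_L2: "square_integrable \<mu> (pd i (\<phi> k))"
  by (rule test_fn_square_integrable[OF finite_measure_\<mu> test_fn_pd[OF \<phi>_test]])

lemma tendsto_integral_mult_\<phi>:
  "square_integrable \<mu> w \<Longrightarrow> (\<lambda>k. LINT x|\<mu>. w x * \<phi> k x) \<longlonglongrightarrow> (LINT x|\<mu>. w x * u x)"
  by (rule integral_mult_tendsto_L2[OF _ \<phi>_L2 u_L2 \<phi>_tendsto])

lemma tendsto_integral_mult_pd_\<phi>:
  "square_integrable \<mu> w \<Longrightarrow> (\<lambda>k. LINT x|\<mu>. w x * pd i (\<phi> k) x) \<longlonglongrightarrow> (LINT x|\<mu>. w x * Du x $ i)"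
  by (rule integral_mult_tendsto_L2[OF _ pd_\<phi>_L2 Du_L2 pd_\<phi>_tendsto])

lemma vanishes_weakly_mult:
  assumes w: "vanishes_weakly \<Omega> w" "square_integrable \<mu> w"
  shows "vanishes_weakly \<Omega> (\<lambda>x. w x * u x)"
  unfolding vanishes_weakly_def
proof (intro allI impI)
  fix \<eta> assume \<eta>: "test_fn \<Omega> \<eta>"
  have "(LINT x|\<mu>. w x * (\<phi> k x * \<eta> x)) = 0" for k
    using w(1) test_fn_mult[OF \<eta> \<phi>_smooth] unfolding vanishes_weakly_def by blast
  then have "(LINT x|\<mu>. w x * \<eta> x * \<phi> k x) = 0" for k
    by (simp add: mult_ac)
  then have "(\<lambda>k. 0) \<longlonglongrightarrow> (LINT x|\<mu>. w x * \<eta> x * u x)"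
    using tendsto_integral_mult_\<phi>[OF square_integrable_mult_test_fn[OF w(2) \<eta>]] by simp
  then show "(LINT x|\<mu>. w x * u x * \<eta> x) = 0" by (simp add: LIMSEQ_const_iff mult_ac)
qed

lemma vanishes_weakly_orthogonal_Du:
  assumes "vanishes_weakly \<Omega> w" "square_integrable \<mu> w"
  shows "(LINT x|\<mu>. w x * Du x $ i) = 0"
proof -
  have "(LINT x|\<mu>. w x * pd i (\<phi> k) x) = 0" for k
    using assms(1) test_fn_pd[OF \<phi>_test] unfolding vanishes_weakly_def by blast
  then have "(\<lambda>k. 0) \<longlonglongrightarrow> (LINT x|\<mu>. w x * Du x $ i)"
    using tendsto_integral_mult_pd_\<phi>[OF assms(2), where i=i] by simp
  then show ?thesis by (simp add: LIMSEQ_const_iff)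
qed

text \<open>Test the weak derivative of \<open>v\<close> against \<open>\<phi>\<^sub>k \<eta>\<close> and let \<open>\<phi>\<^sub>k \<rightarrow> u\<close>.\<close>
lemma weak_pd_mult:
  assumes v: "square_integrable \<mu> v" and w: "square_integrable \<mu> w" and vw: "weak_pd \<Omega> i v w"
  shows "weak_pd \<Omega> i (\<lambda>x. u x * v x) (\<lambda>x. v x * Du x $ i + u x * w x)"
  unfolding weak_pd_def
proof (intro allI impI)
  fix \<eta> assume \<eta>: "test_fn \<Omega> \<eta>"
  have v_pd\<eta>: "square_integrable \<mu> (\<lambda>x. v x * pd i \<eta> x)"
    by (rule square_integrable_mult_test_fn[OF v test_fn_pd[OF \<eta>]])
  have w\<eta>: "square_integrable \<mu> (\<lambda>x. w x * \<eta> x)" by (rule square_integrable_mult_test_fn[OF w \<eta>])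
  have v\<eta>: "square_integrable \<mu> (\<lambda>x. v x * \<eta> x)" by (rule square_integrable_mult_test_fn[OF v \<eta>])
  have approx: "(LINT x|\<mu>. v x * pd i \<eta> x * \<phi> k x)
      = - (LINT x|\<mu>. w x * \<eta> x * \<phi> k x) - (LINT x|\<mu>. v x * \<eta> x * pd i (\<phi> k) x)" for k
  proof -
    have "pd i (\<lambda>x. \<phi> k x * \<eta> x) x = \<phi> k x * pd i \<eta> x + pd i (\<phi> k) x * \<eta> x" for x
      using \<eta> unfolding test_fn_def by (intro pd_mult smooth_differentiable \<phi>_smooth) auto
    then have "(LINT x|\<mu>. v x * pd i (\<lambda>x. \<phi> k x * \<eta> x) x)
        = (LINT x|\<mu>. v x * pd i \<eta> x * \<phi> k x) + (LINT x|\<mu>. v x * \<eta> x * pd i (\<phi> k) x)"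
      using square_integrable_mult_integrable[OF v_pd\<eta> \<phi>_L2]
        square_integrable_mult_integrable[OF v\<eta> pd_\<phi>_L2]
      by (simp add: algebra_simps)
    moreover have "(LINT x|\<mu>. v x * pd i (\<lambda>x. \<phi> k x * \<eta> x) x) = - (LINT x|\<mu>. w x * (\<phi> k x * \<eta> x))"
      using vw test_fn_mult[OF \<eta> \<phi>_smooth] unfolding weak_pd_def by blast
    moreover have "(LINT x|\<mu>. w x * (\<phi> k x * \<eta> x)) = (LINT x|\<mu>. w x * \<eta> x * \<phi> k x)"
      by (simp add: mult_ac)
    ultimately show ?thesis by linarith
  qed
  have "(\<lambda>k. - (LINT x|\<mu>. w x * \<eta> x * \<phi> k x) - (LINT x|\<mu>. v x * \<eta> x * pd i (\<phi> k) x))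
      \<longlonglongrightarrow> - (LINT x|\<mu>. w x * \<eta> x * u x) - (LINT x|\<mu>. v x * \<eta> x * Du x $ i)"
    by (intro tendsto_diff tendsto_minus tendsto_integral_mult_\<phi>[OF w\<eta>] tendsto_integral_mult_pd_\<phi>[OF v\<eta>])
  then have "(LINT x|\<mu>. v x * pd i \<eta> x * u x)
      = - (LINT x|\<mu>. w x * \<eta> x * u x) - (LINT x|\<mu>. v x * \<eta> x * Du x $ i)"
    using LIMSEQ_unique[OF tendsto_integral_mult_\<phi>[OF v_pd\<eta>]] unfolding approx by blast
  moreover have "(LINT x|\<mu>. (v x * Du x $ i + u x * w x) * \<eta> x)
      = (LINT x|\<mu>. v x * \<eta> x * Du x $ i) + (LINT x|\<mu>. w x * \<eta> x * u x)"
    using square_integrable_mult_integrable[OF v\<eta> Du_L2] square_integrable_mult_integrable[OF w\<eta> u_L2]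
    by (simp add: algebra_simps)
  ultimately show "(LINT x|\<mu>. u x * v x * pd i \<eta> x) = - (LINT x|\<mu>. (v x * Du x $ i + u x * w x) * \<eta> x)"
    by (simp add: mult_ac)
qed


definition decay :: "nat \<Rightarrow> real \<Rightarrow> real" where
  "decay m t = (1 - t / M) ^ m"

lemma decay_bounds:
  assumes "0 \<le> t" "t \<le> M"
  shows "0 \<le> decay m t \<and> decay m t \<le> 1"
proof -
  have "0 \<le> 1 - t / M" "1 - t / M \<le> 1" using assms M_pos by (simp_all add: field_simps)
  then show ?thesis unfolding decay_def by (simp add: power_le_one)
qed

lemma decay_tendsto:
  assumes "0 \<le> t" "t \<le> M"
  shows "(\<lambda>m. decay m t) \<longlonglongrightarrow> (if t = 0 then 1 else 0)"
proof (cases "t = 0")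
  case False
  then have "\<bar>1 - t / M\<bar> < 1" using assms M_pos by (simp add: field_simps abs_if)
  then show ?thesis using False unfolding decay_def by (simp add: LIMSEQ_power_zero)
qed (simp add: decay_def)

lemma decay_u_measurable [measurable]: "(\<lambda>x. decay m (u x)) \<in> borel_measurable \<mu>"
  unfolding decay_def by measurable

lemma decay_u_bounds: "AE x in \<mu>. \<bar>decay m (u x)\<bar> \<le> 1 \<and> \<bar>1 - decay m (u x)\<bar> \<le> 1"
  using u_bounds by eventually_elim (use decay_bounds in auto)

lemma square_integrable_decay_mult:
  "square_integrable \<mu> w \<Longrightarrow> square_integrable \<mu> (\<lambda>x. decay m (u x) * w x)"
  using decay_u_bounds by (intro square_integrable_mult_bounded[of _ _ _ 1]) (auto elim: eventually_mono)

lemma square_integrable_cutoff_mult: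
  "square_integrable \<mu> w \<Longrightarrow> square_integrable \<mu> (\<lambda>x. (1 - decay m (u x)) * w x)"
  using decay_u_bounds by (intro square_integrable_mult_bounded[of _ _ _ 1]) (auto elim: eventually_mono)

lemma square_integrable_cutoff: "square_integrable \<mu> (\<lambda>x. 1 - decay m (u x))"
  using decay_u_bounds
  by (intro finite_measure.square_integrable_bounded[OF finite_measure_\<mu>, of _ 1]) (auto elim: eventually_mono)

lemma integral_decay_tendsto:
  assumes "integrable \<mu> w"
  shows "(\<lambda>m. LINT x|\<mu>. decay m (u x) * w x) \<longlonglongrightarrow> (LINT x|\<mu>. (if u x = 0 then w x else 0))"
proof (rule integral_dominated_convergence[where w="\<lambda>x. \<bar>w x\<bar>"])
  show "AE x in \<mu>. (\<lambda>m. decay m (u x) * w x) \<longlonglongrightarrow> (if u x = 0 then w x else 0)"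
    using u_bounds
  proof eventually_elim
    case (elim x)
    then have "(\<lambda>m. decay m (u x) * w x) \<longlonglongrightarrow> (if u x = 0 then 1 else 0) * w x"
      by (intro tendsto_mult_right decay_tendsto) auto
    then show ?case by (cases "u x = 0") auto
  qed
  show "AE x in \<mu>. norm (decay m (u x) * w x) \<le> \<bar>w x\<bar>" for m
    using decay_u_bounds by eventually_elim (auto simp: abs_mult intro: mult_left_le_one_le)
qed (use assms in \<open>auto simp: integrable_iff_bounded\<close>)

lemma decay_Suc: "decay (Suc m) t = (1 - t / M) * decay m t"
  by (simp add: decay_def)

text \<open>The cut-off \<open>1 - (1 - t/M)\<^sup>m\<^sup>+\<^sup>1\<close> vanishes at \<open>0\<close>, so it is built from \<open>u\<close> by products and linear
  combinations alone: no weak derivative of a constant, i.e. no integration by parts for test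
  functions, is needed.\<close>
lemma weak_pd_cutoff:
  "weak_pd \<Omega> i (\<lambda>x. 1 - decay (Suc m) (u x)) (\<lambda>x. real (Suc m) / M * decay m (u x) * Du x $ i)"
proof (induction m)
  case 0
  have "weak_pd \<Omega> i (\<lambda>x. 0 + 1 / M * u x) (\<lambda>x. 0 + 1 / M * Du x $ i)"
    using finite_measure_\<mu> u_L2 Du_L2 weak_pd_u
    by (intro weak_pd_lincomb) (auto simp: weak_pd_def square_integrable_def)
  then show ?case using M_pos by (simp add: decay_def)
next
  case (Suc m)
  let ?v = "\<lambda>x. 1 - decay (Suc m) (u x)" and ?w = "\<lambda>x. real (Suc m) / M * decay m (u x) * Du x $ i"
  have w: "square_integrable \<mu> ?w"
    using square_integrable_cmult[OF square_integrable_decay_mult[OF Du_L2], of "real (Suc m) / M" m i]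
    by (simp add: mult_ac)
  have uv: "square_integrable \<mu> (\<lambda>x. u x * ?v x)"
    using square_integrable_cutoff_mult[OF u_L2] by (simp add: mult_ac)
  have "AE x in \<mu>. \<bar>u x\<bar> \<le> M" using u_bounds by eventually_elim auto
  then have vDu_uw: "square_integrable \<mu> (\<lambda>x. ?v x * Du x $ i + u x * ?w x)"
    by (intro square_integrable_add square_integrable_cutoff_mult Du_L2
        square_integrable_mult_bounded[OF w u_measurable])
  have s1: "square_integrable \<mu> (\<lambda>x. u x + (- 1) * (u x * ?v x))"
    by (rule square_integrable_add[OF u_L2 square_integrable_cmult[OF uv]])
  have s2: "square_integrable \<mu> (\<lambda>x. Du x $ i + (- 1) * (?v x * Du x $ i + u x * ?w x))"
    by (rule square_integrable_add[OF Du_L2 square_integrable_cmult[OF vDu_uw]])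
  have "weak_pd \<Omega> i (\<lambda>x. u x * ?v x) (\<lambda>x. ?v x * Du x $ i + u x * ?w x)"
    by (rule weak_pd_mult[OF square_integrable_cutoff w Suc.IH])
  then have "weak_pd \<Omega> i (\<lambda>x. u x + (- 1) * (u x * ?v x))
      (\<lambda>x. Du x $ i + (- 1) * (?v x * Du x $ i + u x * ?w x))"
    by (rule weak_pd_lincomb[OF finite_measure_\<mu> u_L2 uv Du_L2 vDu_uw weak_pd_u])
  then have "weak_pd \<Omega> i (\<lambda>x. ?v x + 1 / M * (u x + (- 1) * (u x * ?v x)))
      (\<lambda>x. ?w x + 1 / M * (Du x $ i + (- 1) * (?v x * Du x $ i + u x * ?w x)))"
    by (rule weak_pd_lincomb[OF finite_measure_\<mu> square_integrable_cutoff s1 w s2 Suc.IH])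
  moreover have "(\<lambda>x. ?v x + 1 / M * (u x + (- 1) * (u x * ?v x))) = (\<lambda>x. 1 - decay (Suc (Suc m)) (u x))"
    using M_pos by (simp add: fun_eq_iff decay_Suc field_simps)
  moreover have "(\<lambda>x. ?w x + 1 / M * (Du x $ i + (- 1) * (?v x * Du x $ i + u x * ?w x)))
      = (\<lambda>x. real (Suc (Suc m)) / M * decay (Suc m) (u x) * Du x $ i)"
    using M_pos by (simp add: fun_eq_iff decay_Suc field_simps)
  ultimately show ?case by simp
qed


lemma vanishes_weakly_Du_on_zero_set: "vanishes_weakly \<Omega> (\<lambda>x. if u x = 0 then Du x $ i else 0)"
  unfolding vanishes_weakly_def
proof (intro allI impI)
  fix \<eta> assume \<eta>: "test_fn \<Omega> \<eta>"
  define s where "s m = (LINT x|\<mu>. decay m (u x) * (Du x $ i * \<eta> x))" for m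
  have Du\<eta>: "integrable \<mu> (\<lambda>x. Du x $ i * \<eta> x)"
    by (rule integrable_mult_test_fn[OF finite_measure_\<mu> Du_L2 \<eta>])
  have "s \<longlonglongrightarrow> (LINT x|\<mu>. (if u x = 0 then Du x $ i * \<eta> x else 0))"
    unfolding s_def by (rule integral_decay_tendsto[OF Du\<eta>])
  moreover have "s \<longlonglongrightarrow> 0"
  proof (rule Lim_null_comparison)
    define C where "C = (LINT x|\<mu>. \<bar>pd i \<eta> x\<bar>)"
    have "\<bar>s m\<bar> \<le> M * C / real (Suc m)" for m
    proof -
      have cut: "square_integrable \<mu> (\<lambda>x. 1 - decay (Suc m) (u x))"
        by (rule square_integrable_cutoff)
      have "(LINT x|\<mu>. (1 - decay (Suc m) (u x)) * pd i \<eta> x)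
          = - (LINT x|\<mu>. (real (Suc m) / M * decay m (u x) * Du x $ i) * \<eta> x)"
        using weak_pd_cutoff[of i m] \<eta> unfolding weak_pd_def by blast
      also have "(\<lambda>x. (real (Suc m) / M * decay m (u x) * Du x $ i) * \<eta> x)
          = (\<lambda>x. real (Suc m) / M * (decay m (u x) * (Du x $ i * \<eta> x)))"
        by (simp add: fun_eq_iff mult_ac)
      finally have "real (Suc m) / M * s m = - (LINT x|\<mu>. (1 - decay (Suc m) (u x)) * pd i \<eta> x)"
        unfolding s_def by simp
      also have "\<bar>\<dots>\<bar> \<le> C"
        unfolding C_def abs_minus_cancel
      proof (rule order_trans[OF integral_abs_bound integral_mono_AE])
        show "integrable \<mu> (\<lambda>x. \<bar>(1 - decay (Suc m) (u x)) * pd i \<eta> x\<bar>)"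
          using integrable_mult_test_fn[OF finite_measure_\<mu> cut test_fn_pd[OF \<eta>]] by simp
        have "integrable \<mu> (pd i \<eta>)"
          using finite_measure.square_integrable_imp_integrable[OF finite_measure_\<mu>, of "pd i \<eta>"]
            test_fn_square_integrable[OF finite_measure_\<mu> test_fn_pd[OF \<eta>]]
          unfolding square_integrable_def by blast
        then show "integrable \<mu> (\<lambda>x. \<bar>pd i \<eta> x\<bar>)" by (rule integrable_abs)
        show "AE x in \<mu>. \<bar>(1 - decay (Suc m) (u x)) * pd i \<eta> x\<bar> \<le> \<bar>pd i \<eta> x\<bar>"
          using decay_u_bounds by eventually_elim (auto simp: abs_mult intro: mult_left_le_one_le)
      qed
      finally show ?thesis using M_pos by (simp add: field_simps abs_mult)
    qed
    then show "\<forall>\<^sub>F m in sequentially. norm (s m) \<le> M * C * inverse (real (Suc m))"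
      by (simp add: divide_inverse)
    show "(\<lambda>m. M * C * inverse (real (Suc m))) \<longlonglongrightarrow> 0"
      by (rule tendsto_mult_right_zero[OF LIMSEQ_inverse_real_of_nat])
  qed
  ultimately have "(LINT x|\<mu>. (if u x = 0 then Du x $ i * \<eta> x else 0)) = 0"
    by (rule LIMSEQ_unique)
  moreover have "(\<lambda>x. (if u x = 0 then Du x $ i else 0) * \<eta> x) = (\<lambda>x. if u x = 0 then Du x $ i * \<eta> x else 0)"
    by auto
  ultimately show "(LINT x|\<mu>. (if u x = 0 then Du x $ i else 0) * \<eta> x) = 0"
    by simp
qed


lemma Du_eq_0_on_zero_set: "AE x in \<mu>. u x = 0 \<longrightarrow> Du x $ i = 0"
proof -
  let ?Z = "\<lambda>x. if u x = 0 then Du x $ i else 0"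
  have "square_integrable \<mu> (\<lambda>x. (if u x = 0 then 1 else 0) * Du x $ i)"
    by (rule square_integrable_mult_bounded[OF Du_L2, of _ 1]) auto
  moreover have "(\<lambda>x. (if u x = 0 then 1 else 0) * Du x $ i) = ?Z" by auto
  ultimately have Z: "square_integrable \<mu> ?Z" by simp
  have "(LINT x|\<mu>. ?Z x * Du x $ i) = 0"
    by (rule vanishes_weakly_orthogonal_Du[OF vanishes_weakly_Du_on_zero_set Z])
  then have "AE x in \<mu>. ?Z x * Du x $ i = 0"
    using integral_nonneg_eq_0_iff_AE[OF square_integrable_mult_integrable[OF Z Du_L2]] by simp
  then show ?thesis by eventually_elim (auto split: if_splits)
qed

lemma vanishes_weakly_cutoff_mult:
  assumes uB: "vanishes_weakly \<Omega> (\<lambda>x. u x * B x)" and B: "square_integrable \<mu> B"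
  shows "vanishes_weakly \<Omega> (\<lambda>x. (1 - decay m (u x)) * B x)"
proof (induction m)
  case 0
  show ?case by (simp add: vanishes_weakly_def decay_def)
next
  case (Suc m)
  let ?C = "\<lambda>x. (1 - decay m (u x)) * B x"
  have C: "square_integrable \<mu> ?C" by (rule square_integrable_cutoff_mult[OF B])
  have "AE x in \<mu>. \<bar>u x\<bar> \<le> M" using u_bounds by eventually_elim auto
  then have uC: "square_integrable \<mu> (\<lambda>x. ?C x * u x)" and uB_L2: "square_integrable \<mu> (\<lambda>x. u x * B x)"
    using square_integrable_mult_bounded[OF C u_measurable] square_integrable_mult_bounded[OF B u_measurable]
    by (simp_all add: mult_ac)
  have s: "square_integrable \<mu> (\<lambda>x. u x * B x + (- 1) * (?C x * u x))"
    by (rule square_integrable_add[OF uB_L2 square_integrable_cmult[OF uC]])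
  have "vanishes_weakly \<Omega> (\<lambda>x. u x * B x + (- 1) * (?C x * u x))"
    by (rule vanishes_weakly_lincomb[OF finite_measure_\<mu> uB_L2 uC uB vanishes_weakly_mult[OF Suc.IH C]])
  then have "vanishes_weakly \<Omega> (\<lambda>x. ?C x + 1 / M * (u x * B x + (- 1) * (?C x * u x)))"
    by (rule vanishes_weakly_lincomb[OF finite_measure_\<mu> C s Suc.IH])
  moreover have "(\<lambda>x. ?C x + 1 / M * (u x * B x + (- 1) * (?C x * u x))) = (\<lambda>x. (1 - decay (Suc m) (u x)) * B x)"
    using M_pos by (simp add: fun_eq_iff decay_Suc field_simps)
  ultimately show ?case by simp
qed

text \<open>Stampacchia's argument: \<open>u \<partial>\<^sub>i b\<close> vanishes weakly by the product rule for \<open>u b = 0\<close>,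
  hence \<open>(1 - (1 - u/M)\<^sup>m) \<partial>\<^sub>i b\<close> vanishes weakly for every \<open>m\<close>; letting \<open>m \<rightarrow> \<infinity>\<close>
  gives \<open>\<partial>\<^sub>i b \<partial>\<^sub>i u = 0\<close> off \<open>{u = 0}\<close>, and on \<open>{u = 0}\<close> it holds because \<open>\<partial>\<^sub>i u\<close>
  vanishes there.\<close>
lemma integral_weak_pd_mult_Du_disjoint_support:
  assumes b: "square_integrable \<mu> b" and B: "square_integrable \<mu> B" and bB: "weak_pd \<Omega> i b B"
    and disjoint: "\<And>x. u x * b x = 0"
  shows "(LINT x|\<mu>. B x * Du x $ i) = 0"
proof -
  have b_Du: "AE x in \<mu>. b x * Du x $ i = 0"
    using Du_eq_0_on_zero_set[of i] by eventually_elim (metis disjoint mult_eq_0_iff)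
  have [measurable]: "b \<in> borel_measurable \<mu>" "B \<in> borel_measurable \<mu>"
    using b B unfolding square_integrable_def by auto
  have uB: "vanishes_weakly \<Omega> (\<lambda>x. u x * B x)"
    unfolding vanishes_weakly_def
  proof (intro allI impI)
    fix \<eta> assume \<eta>: "test_fn \<Omega> \<eta>"
    have [measurable]: "\<eta> \<in> borel_measurable \<mu>" by (rule test_fn_measurable[OF \<eta>])
    have "weak_pd \<Omega> i (\<lambda>x. u x * b x) (\<lambda>x. b x * Du x $ i + u x * B x)"
      by (rule weak_pd_mult[OF b B bB])
    then have "(LINT x|\<mu>. (b x * Du x $ i + u x * B x) * \<eta> x) = 0"
      using \<eta> disjoint unfolding weak_pd_def by simp
    moreover have "(LINT x|\<mu>. (b x * Du x $ i + u x * B x) * \<eta> x) = (LINT x|\<mu>. u x * B x * \<eta> x)"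
    proof (rule integral_cong_AE)
      show "AE x in \<mu>. (b x * Du x $ i + u x * B x) * \<eta> x = u x * B x * \<eta> x"
        using b_Du by eventually_elim simp
    qed (measurable, measurable)
    ultimately show "(LINT x|\<mu>. u x * B x * \<eta> x) = 0" by simp
  qed
  have BDu: "integrable \<mu> (\<lambda>x. B x * Du x $ i)"
    by (rule square_integrable_mult_integrable[OF B Du_L2])
  have "(LINT x|\<mu>. decay m (u x) * (B x * Du x $ i)) = (LINT x|\<mu>. B x * Du x $ i)" for m
  proof -
    have "(LINT x|\<mu>. (1 - decay m (u x)) * B x * Du x $ i) = 0"
      by (rule vanishes_weakly_orthogonal_Du[OF vanishes_weakly_cutoff_mult[OF uB B]
            square_integrable_cutoff_mult[OF B]])
    moreover have "integrable \<mu> (\<lambda>x. decay m (u x) * (B x * Du x $ i))"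
      using square_integrable_mult_integrable[OF square_integrable_decay_mult[OF B] Du_L2]
      by (simp add: mult_ac)
    ultimately show ?thesis using BDu by (simp add: algebra_simps)
  qed
  then have "(\<lambda>m. LINT x|\<mu>. B x * Du x $ i) \<longlonglongrightarrow> (LINT x|\<mu>. (if u x = 0 then B x * Du x $ i else 0))"
    using integral_decay_tendsto[OF BDu] by simp
  moreover have "(LINT x|\<mu>. (if u x = 0 then B x * Du x $ i else 0)) = 0"
    using Du_eq_0_on_zero_set[of i] by (intro integral_eq_zero_AE) (auto elim!: eventually_mono)
  ultimately show ?thesis by (simp add: LIMSEQ_const_iff)
qed


text \<open>Testing \<open>\<partial>\<^sub>j u = 0\<close> against \<open>x\<^sub>j \<phi>\<^sub>k\<close> gives \<open>\<integral> u \<phi>\<^sub>k + \<integral> x\<^sub>j u \<partial>\<^sub>j \<phi>\<^sub>k = 0\<close>,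
  which tends to \<open>\<integral> u\<^sup>2 = 0\<close>; the boundedness of \<open>\<Omega>\<close> makes \<open>x\<^sub>j u\<close> square integrable.\<close>
lemma AE_eq_0_if_pd_eq_0:
  assumes Du_j: "AE x in \<mu>. Du x $ j = 0"
  shows "AE x in \<mu>. u x = 0"
proof -
  obtain R where R: "\<And>x. x \<in> \<Omega> \<Longrightarrow> norm x \<le> R"
    using bounded_domain unfolding bounded_iff by blast
  have "(\<lambda>x. x $ j) \<in> borel_measurable \<mu>"
    by (intro borel_measurable_lebesgue_onI borel_measurable_continuous_onI
        linear_continuous_on bounded_linear_vec_nth)
  moreover have "AE x in \<mu>. \<bar>x $ j\<bar> \<le> R"
    using R by (intro AE_I2) (auto simp: space_lebesgue_on intro: order_trans[OF component_le_norm_cart])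
  ultimately have xu: "square_integrable \<mu> (\<lambda>x. x $ j * u x)"
    by (rule square_integrable_mult_bounded[OF u_L2])
  have approx: "(LINT x|\<mu>. u x * \<phi> k x) + (LINT x|\<mu>. x $ j * u x * pd j (\<phi> k) x) = 0" for k
  proof -
    have "pd j (\<lambda>x. x $ j * \<phi> k x) x = x $ j * pd j (\<phi> k) x + \<phi> k x" for x
      by (simp add: pd_mult smooth_differentiable[OF smooth_component] smooth_differentiable[OF \<phi>_smooth]
          pd_component)
    then have "(LINT x|\<mu>. u x * pd j (\<lambda>x. x $ j * \<phi> k x) x)
        = (LINT x|\<mu>. u x * \<phi> k x) + (LINT x|\<mu>. x $ j * u x * pd j (\<phi> k) x)"
      using square_integrable_mult_integrable[OF u_L2 \<phi>_L2]
        square_integrable_mult_integrable[OF xu pd_\<phi>_L2]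
      by (simp add: algebra_simps)
    moreover have "(LINT x|\<mu>. u x * pd j (\<lambda>x. x $ j * \<phi> k x) x) = - (LINT x|\<mu>. Du x $ j * (x $ j * \<phi> k x))"
      using weak_pd_u test_fn_mult[OF \<phi>_test smooth_component] unfolding weak_pd_def by blast
    moreover have "(LINT x|\<mu>. Du x $ j * (x $ j * \<phi> k x)) = 0"
      using Du_j by (intro integral_eq_zero_AE) (auto elim!: eventually_mono)
    ultimately show ?thesis by simp
  qed
  have "(\<lambda>k. (LINT x|\<mu>. u x * \<phi> k x) + (LINT x|\<mu>. x $ j * u x * pd j (\<phi> k) x))
      \<longlonglongrightarrow> (LINT x|\<mu>. u x * u x) + (LINT x|\<mu>. x $ j * u x * Du x $ j)"
    by (intro tendsto_add tendsto_integral_mult_\<phi>[OF u_L2] tendsto_integral_mult_pd_\<phi>[OF xu])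
  moreover have "(LINT x|\<mu>. x $ j * u x * Du x $ j) = 0"
    using Du_j by (intro integral_eq_zero_AE) (auto elim!: eventually_mono)
  ultimately have "(LINT x|\<mu>. u x * u x) = 0"
    unfolding approx by (simp add: LIMSEQ_const_iff)
  then have "AE x in \<mu>. u x * u x = 0"
    using integral_nonneg_eq_0_iff_AE[OF square_integrable_mult_integrable[OF u_L2 u_L2]] by simp
  then show ?thesis by eventually_elim simp
qed

lemma AE_eq_0_if_integral_inner_Du_le_0:
  assumes "(LINT x|\<mu>. Du x \<bullet> Du x) \<le> 0"
  shows "AE x in \<mu>. u x = 0"
proof -
  obtain j :: 'n where True by simp
  have int: "integrable \<mu> (\<lambda>x. Du x $ i * Du x $ i)" for i
    by (rule square_integrable_mult_integrable[OF Du_L2 Du_L2])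
  have "(LINT x|\<mu>. Du x \<bullet> Du x) = (\<Sum>i\<in>UNIV. LINT x|\<mu>. Du x $ i * Du x $ i)"
    unfolding inner_vec_def using int by (simp add: Bochner_Integration.integral_sum)
  then have "(\<Sum>i\<in>UNIV. LINT x|\<mu>. Du x $ i * Du x $ i) = 0"
    using assms by (simp add: order_antisym sum_nonneg)
  then have "(LINT x|\<mu>. Du x $ j * Du x $ j) = 0"
    by (simp add: sum_nonneg_eq_0_iff)
  then have "AE x in \<mu>. Du x $ j * Du x $ j = 0"
    using integral_nonneg_eq_0_iff_AE[OF int] by simp
  then show ?thesis by (intro AE_eq_0_if_pd_eq_0[of j]) (auto elim: eventually_mono)
qed

lemma integral_inner_weak_grad_positive_part:
  assumes v: "H1 \<Omega> v" and w: "H1 \<Omega> w" and u_eq: "\<And>x. u x = max 0 (v x - w x)"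
  shows "(LINT x|\<mu>. wgrad \<Omega> v x \<bullet> Du x) - (LINT x|\<mu>. wgrad \<Omega> w x \<bullet> Du x) = (LINT x|\<mu>. Du x \<bullet> Du x)"
proof -
  let ?Gv = "wgrad \<Omega> v" and ?Gw = "wgrad \<Omega> w"
  have grads: "weak_grad \<Omega> v ?Gv" "weak_grad \<Omega> w ?Gw" using v w by (auto intro: H1_weak_grad)
  have L2: "square_integrable \<mu> v" "square_integrable \<mu> w"
    using v w unfolding H1_def L2_iff_square_integrable by auto
  note G_L2 = weak_grad_square_integrable[OF grads(1)] weak_grad_square_integrable[OF grads(2)]
  have each: "(LINT x|\<mu>. ?Gv x $ i * Du x $ i) - (LINT x|\<mu>. ?Gw x $ i * Du x $ i) = (LINT x|\<mu>. Du x $ i * Du x $ i)" for i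
  proof -
    let ?b = "\<lambda>x. u x + (- 1) * v x + 1 * w x" and ?B = "\<lambda>x. Du x $ i + (- 1) * ?Gv x $ i + 1 * ?Gw x $ i"
    have b: "square_integrable \<mu> ?b"
      by (intro square_integrable_add square_integrable_cmult u_L2 L2)
    have B: "square_integrable \<mu> ?B"
      by (intro square_integrable_add square_integrable_cmult Du_L2 G_L2)
    have "weak_pd \<Omega> i ?b ?B"
      using L2 G_L2 weak_grad_imp_weak_pd[OF grads(1)] weak_grad_imp_weak_pd[OF grads(2)]
      by (intro weak_pd_lincomb[OF finite_measure_\<mu>] square_integrable_add square_integrable_cmult
          u_L2 Du_L2 weak_pd_u)
    moreover have "u x * ?b x = 0" for x by (simp add: u_eq max_def)
    ultimately have "(LINT x|\<mu>. ?B x * Du x $ i) = 0"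
      by (intro integral_weak_pd_mult_Du_disjoint_support[OF b B])
    moreover have "(LINT x|\<mu>. ?Gv x $ i * Du x $ i) - (LINT x|\<mu>. ?Gw x $ i * Du x $ i)
        = (LINT x|\<mu>. Du x $ i * Du x $ i) - (LINT x|\<mu>. ?B x * Du x $ i)"
      using square_integrable_mult_integrable[OF G_L2(1) Du_L2] square_integrable_mult_integrable[OF G_L2(2) Du_L2]
        square_integrable_mult_integrable[OF Du_L2 Du_L2]
      by (simp add: algebra_simps)
    ultimately show ?thesis by simp
  qed
  have "(LINT x|\<mu>. G x \<bullet> Du x) = (\<Sum>i\<in>UNIV. LINT x|\<mu>. G x $ i * Du x $ i)"
    if "\<And>i. square_integrable \<mu> (\<lambda>x. G x $ i)" for G
    unfolding inner_vec_def
    using square_integrable_mult_integrable[OF that Du_L2] by (simp add: Bochner_Integration.integral_sum)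
  then show ?thesis
    using G_L2 each Du_L2 by (simp add: sum_subtractf[symmetric])
qed

end

lemma H10_approximation_exists:
  assumes "open \<Omega>" "bounded \<Omega>" and u: "H10 \<Omega> u"
    and bounds: "AE x in lebesgue_on \<Omega>. 0 \<le> u x \<and> u x \<le> M" "0 < M"
  obtains \<phi> where "H10_approximation \<Omega> u (wgrad \<Omega> u) \<phi> M"
proof -
  let ?G = "wgrad \<Omega> u"
  obtain \<phi> where \<phi>: "\<And>k. test_fn \<Omega> (\<phi> k)" and lim:
    "(\<lambda>k. (LINT x|lebesgue_on \<Omega>. (\<phi> k x - u x)\<^sup>2)
       + (\<Sum>i\<in>UNIV. LINT x|lebesgue_on \<Omega>. (pd i (\<phi> k) x - ?G x $ i)\<^sup>2)) \<longlonglongrightarrow> 0"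
    using u unfolding H10_def by blast
  have H1: "H1 \<Omega> u" using u unfolding H10_def by blast
  have grad: "weak_grad \<Omega> u ?G" by (rule H1_weak_grad[OF H1])
  have nonneg: "0 \<le> (LINT x|lebesgue_on \<Omega>. (\<phi> k x - u x)\<^sup>2)"
    "0 \<le> (LINT x|lebesgue_on \<Omega>. (pd i (\<phi> k) x - ?G x $ i)\<^sup>2)" for k i
    by simp_all
  have "(\<lambda>k. LINT x|lebesgue_on \<Omega>. (\<phi> k x - u x)\<^sup>2) \<longlonglongrightarrow> 0"
    using nonneg by (intro tendsto_sandwich[OF _ _ tendsto_const lim] always_eventually allI)
      (simp_all add: sum_nonneg)
  moreover have "(\<lambda>k. LINT x|lebesgue_on \<Omega>. (pd i (\<phi> k) x - ?G x $ i)\<^sup>2) \<longlonglongrightarrow> 0" for i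
  proof (intro tendsto_sandwich[OF _ _ tendsto_const lim] always_eventually allI)
    fix k
    have "(LINT x|lebesgue_on \<Omega>. (pd i (\<phi> k) x - ?G x $ i)\<^sup>2)
        \<le> (\<Sum>i\<in>UNIV. LINT x|lebesgue_on \<Omega>. (pd i (\<phi> k) x - ?G x $ i)\<^sup>2)"
      using nonneg by (intro member_le_sum) auto
    then show "(LINT x|lebesgue_on \<Omega>. (pd i (\<phi> k) x - ?G x $ i)\<^sup>2)
        \<le> (LINT x|lebesgue_on \<Omega>. (\<phi> k x - u x)\<^sup>2)
          + (\<Sum>i\<in>UNIV. LINT x|lebesgue_on \<Omega>. (pd i (\<phi> k) x - ?G x $ i)\<^sup>2)"
      using nonneg(1)[of k] by linarith
  qed simp
  moreover have "u \<in> borel_measurable (lebesgue_on \<Omega>)"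
    using H1 unfolding H1_def L2_def by blast
  ultimately have "H10_approximation \<Omega> u ?G \<phi> M"
    using assms \<phi> weak_grad_square_integrable[OF grad] weak_grad_imp_weak_pd[OF grad]
    by unfold_locales auto
  then show thesis by (rule that)
qed


lemma Lp_imp_integrable:
  assumes "finite_measure (lebesgue_on \<Omega>)" "1 \<le> p" "Lp p \<Omega> f"
  shows "integrable (lebesgue_on \<Omega>) f"
proof (rule Bochner_Integration.integrable_bound)
  show "integrable (lebesgue_on \<Omega>) (\<lambda>x. 1 + \<bar>f x\<bar> powr p)"
    using assms(3) unfolding Lp_def
    by (intro Bochner_Integration.integrable_add finite_measure.integrable_const[OF assms(1)]) auto
  show "AE x in lebesgue_on \<Omega>. norm (f x) \<le> norm (1 + \<bar>f x\<bar> powr p)"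
  proof (intro AE_I2)
    fix x
    have "\<bar>f x\<bar> \<le> 1 + \<bar>f x\<bar> powr p"
    proof (cases "\<bar>f x\<bar> \<le> 1")
      case False
      then have "\<bar>f x\<bar> powr 1 \<le> \<bar>f x\<bar> powr p" using assms(2) by (intro powr_mono) auto
      then show ?thesis using False by simp
    qed (simp add: add_increasing2)
    then show "norm (f x) \<le> norm (1 + \<bar>f x\<bar> powr p)" by simp
  qed
qed (use assms(3) in \<open>simp add: Lp_def\<close>)

theorem lemma4p4:
  fixes \<Omega> :: "(real^'n::finite) set"
    and \<sigma> C \<gamma> p lam L :: real
    and h H \<psi> g :: "real \<Rightarrow> real"
    and f vl vu :: "real^'n \<Rightarrow> real"
  assumes "open \<Omega>" and "bounded \<Omega>"
    and "\<sigma> > 0"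
    and "continuous_on {0..<\<sigma>} h"
    and "\<forall>s\<in>{0..<\<sigma>}. h s \<ge> 0"
    and "strict_mono_on {0..<\<sigma>} h"
    and "filterlim h at_top (at_left \<sigma>)"
    and "1 \<le> \<gamma>" and "\<gamma> < 2" and "C > 0"
    and "((\<lambda>s. (\<sigma> - s) powr \<gamma> * h s) \<longlongrightarrow> C) (at_left \<sigma>)"
    and "p \<ge> 1" and "p > real CARD('n) / 2"
    and "Lp p \<Omega> f" and "AE x in lebesgue_on \<Omega>. f x \<ge> 0"
    and "lam > 0"
    and H_def: "\<forall>s. H s = integral {0..s} h"
    and \<psi>_def: "\<forall>s. \<psi> s = integral {0..s} (\<lambda>t. exp (- H t))"
    and L_def: "L = \<psi> \<sigma>"
    and g_def: "\<forall>s. g s = (if s < L then exp (- H (the_inv_into {0..<\<sigma>} \<psi> s)) else 0)"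
    and "H1 \<Omega> vl" and "H1 \<Omega> vu"
    and "AE x in lebesgue_on \<Omega>. 0 \<le> vl x \<and> vl x \<le> L"
    and "AE x in lebesgue_on \<Omega>. 0 \<le> vu x \<and> vu x \<le> L"
    and "\<forall>\<phi>. H10 \<Omega> \<phi> \<and> (AE x in lebesgue_on \<Omega>. \<phi> x \<ge> 0) \<longrightarrow>
           integral\<^sup>L (lebesgue_on \<Omega>) (\<lambda>x. wgrad \<Omega> vl x \<bullet> wgrad \<Omega> \<phi> x)
             \<le> integral\<^sup>L (lebesgue_on \<Omega>) (\<lambda>x. lam * f x * g (vl x) * \<phi> x)"
    and "\<forall>\<phi>. H10 \<Omega> \<phi> \<and> (AE x in lebesgue_on \<Omega>. \<phi> x \<ge> 0) \<longrightarrow>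
           integral\<^sup>L (lebesgue_on \<Omega>) (\<lambda>x. wgrad \<Omega> vu x \<bullet> wgrad \<Omega> \<phi> x)
             \<ge> integral\<^sup>L (lebesgue_on \<Omega>) (\<lambda>x. lam * f x * g (vu x) * \<phi> x)"
    and "H10 \<Omega> (\<lambda>x. max 0 (vl x - vu x))"
  shows "AE x in lebesgue_on \<Omega>. vl x \<le> vu x"
proof -
  interpret g: transformed_nonlinearity \<sigma> L h H \<psi> g
    using assms(3-5) H_def \<psi>_def L_def g_def by unfold_locales
  define a where "a = (\<lambda>x. max 0 (vl x - vu x))"
  have a_H10: "H10 \<Omega> a" and a_nonneg: "AE x in lebesgue_on \<Omega>. a x \<ge> 0"
    using assms(27) by (simp_all add: a_def)
  have "AE x in lebesgue_on \<Omega>. 0 \<le> a x \<and> a x \<le> L + 1"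
    using assms(23,24) by eventually_elim (auto simp: a_def)
  moreover have "0 < L + 1" using g.L_nonneg by simp
  ultimately obtain \<phi> where "H10_approximation \<Omega> a (wgrad \<Omega> a) \<phi> (L + 1)"
    by (rule H10_approximation_exists[OF assms(1,2) a_H10])
  then interpret a: H10_approximation \<Omega> a "wgrad \<Omega> a" \<phi> "L + 1" .
  have measurable: "vl \<in> borel_measurable a.\<mu>" "vu \<in> borel_measurable a.\<mu>"
    using assms(21,22) unfolding H1_def L2_def by auto
  have "(LINT x|a.\<mu>. wgrad \<Omega> vl x \<bullet> wgrad \<Omega> a x) \<le> (LINT x|a.\<mu>. lam * f x * g (vl x) * a x)"
    using assms(25) a_H10 a_nonneg by simp
  also have "\<dots> \<le> (LINT x|a.\<mu>. lam * f x * g (vu x) * a x)"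
    unfolding a_def
    using Lp_imp_integrable[OF a.finite_measure_\<mu> assms(12,14)] assms(15,16,23,24) measurable
    by (intro g.integral_g_positive_part_mono) auto
  also have "\<dots> \<le> (LINT x|a.\<mu>. wgrad \<Omega> vu x \<bullet> wgrad \<Omega> a x)"
    using assms(26) a_H10 a_nonneg by simp
  finally have "(LINT x|a.\<mu>. wgrad \<Omega> a x \<bullet> wgrad \<Omega> a x) \<le> 0"
    using a.integral_inner_weak_grad_positive_part[OF assms(21,22)] by (simp add: a_def)
  then have "AE x in a.\<mu>. a x = 0" by (rule a.AE_eq_0_if_integral_inner_Du_le_0)
  then show ?thesis by eventually_elim (simp add: a_def)
qed

end
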